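(* Let $M$ be a right $R$-module which is an internal direct sum $M=\bigoplus_{n\in\mathbb{N}}M_n$ of countably many nonzero submodules $M_n$, and let $S=\mathrm{End}(M_R)$, so that $M$ is a left $S$-module. Then ${}_SM$ is not an $\aleph_0$-injective left $S$-module.
   Context: A left $S$-module $N$ is $\aleph_0$-injective if for every countably generated left ideal $J$ of $S$ and every $S$-homomorphism $f:J\to N$ there is an $S$-homomorphism $\bar f:S\to N$ with $\bar f|_J=f$. *)

theory Defs
  imports Main "HOL-Library.Countable_Set"
begin

definition right_module :: "('m::ab_group_add \<Rightarrow> 'r::ring_1 \<Rightarrow> 'm) \<Rightarrow> bool" where
  "right_module smul \<longleftrightarrow>
     (\<forall>x y r. smul (x + y) r = smul x r + smul y r) \<and>
     (\<forall>x r s. smul x (r + s) = smul x r + smul x s) \<and>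
     (\<forall>x r s. smul x (r * s) = smul (smul x r) s) \<and>
     (\<forall>x. smul x 1 = x)"

definition submodule :: "('m::ab_group_add \<Rightarrow> 'r::ring_1 \<Rightarrow> 'm) \<Rightarrow> 'm set \<Rightarrow> bool" where
  "submodule smul N \<longleftrightarrow> 0 \<in> N \<and> (\<forall>x\<in>N. \<forall>y\<in>N. x + y \<in> N) \<and> (\<forall>x\<in>N. - x \<in> N)
     \<and> (\<forall>x\<in>N. \<forall>r. smul x r \<in> N)"

text \<open>M (= the whole type 'm) is the internal direct sum of the submodules Mn n:
every element is uniquely a finite sum of elements of the Mn n.\<close>
definition internal_direct_sum :: "('m::ab_group_add \<Rightarrow> 'r::ring_1 \<Rightarrow> 'm) \<Rightarrow> (nat \<Rightarrow> 'm set) \<Rightarrow> bool" where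
  "internal_direct_sum smul Mn \<longleftrightarrow>
     (\<forall>n. submodule smul (Mn n)) \<and>
     (\<forall>x. \<exists>!c. finite {n. c n \<noteq> 0} \<and> (\<forall>n. c n \<in> Mn n) \<and> x = sum c {n. c n \<noteq> 0})"

text \<open>S = End(M_R): the R-linear endomorphisms of M. Multiplication in S is
composition, so M is a left S-module via s \<cdot> m = s m.\<close>
definition End_R :: "('m::ab_group_add \<Rightarrow> 'r::ring_1 \<Rightarrow> 'm) \<Rightarrow> ('m \<Rightarrow> 'm) set" where
  "End_R smul = {f. (\<forall>x y. f (x + y) = f x + f y) \<and> (\<forall>x r. f (smul x r) = smul (f x) r)}"

definition left_ideal_End :: "('m::ab_group_add \<Rightarrow> 'r::ring_1 \<Rightarrow> 'm) \<Rightarrow> ('m \<Rightarrow> 'm) set \<Rightarrow> bool" where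
  "left_ideal_End smul J \<longleftrightarrow> J \<subseteq> End_R smul \<and> (\<lambda>_. 0) \<in> J
     \<and> (\<forall>a\<in>J. \<forall>b\<in>J. (\<lambda>x. a x + b x) \<in> J) \<and> (\<forall>a\<in>J. (\<lambda>x. - a x) \<in> J)
     \<and> (\<forall>s\<in>End_R smul. \<forall>a\<in>J. s \<circ> a \<in> J)"

definition left_ideal_gen_End :: "('m::ab_group_add \<Rightarrow> 'r::ring_1 \<Rightarrow> 'm) \<Rightarrow> ('m \<Rightarrow> 'm) set \<Rightarrow> ('m \<Rightarrow> 'm) set" where
  "left_ideal_gen_End smul X = \<Inter>{J. left_ideal_End smul J \<and> X \<subseteq> J}"

definition countably_generated_left_ideal_End :: "('m::ab_group_add \<Rightarrow> 'r::ring_1 \<Rightarrow> 'm) \<Rightarrow> ('m \<Rightarrow> 'm) set \<Rightarrow> bool" where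
  "countably_generated_left_ideal_End smul J \<longleftrightarrow> left_ideal_End smul J \<and>
     (\<exists>X. countable X \<and> X \<subseteq> End_R smul \<and> J = left_ideal_gen_End smul X)"

text \<open>An S-homomorphism from a left ideal J of S to the left S-module M (values off J irrelevant).\<close>
definition S_hom_on :: "('m::ab_group_add \<Rightarrow> 'r::ring_1 \<Rightarrow> 'm) \<Rightarrow> ('m \<Rightarrow> 'm) set \<Rightarrow> (('m \<Rightarrow> 'm) \<Rightarrow> 'm) \<Rightarrow> bool" where
  "S_hom_on smul J f \<longleftrightarrow>
     (\<forall>a\<in>J. \<forall>b\<in>J. f (\<lambda>x. a x + b x) = f a + f b) \<and>
     (\<forall>s\<in>End_R smul. \<forall>a\<in>J. f (s \<circ> a) = s (f a))"

definition aleph0_injective_over_End :: "('m::ab_group_add \<Rightarrow> 'r::ring_1 \<Rightarrow> 'm) \<Rightarrow> bool" where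
  "aleph0_injective_over_End smul \<longleftrightarrow>
     (\<forall>J f. countably_generated_left_ideal_End smul J \<and> S_hom_on smul J f \<longrightarrow>
        (\<exists>g. S_hom_on smul (End_R smul) g \<and> (\<forall>a\<in>J. g a = f a)))"

end

theory Submission
  imports Defs HOL.Modules
begin

(* Let M = \<Oplus>n M_n with every M_n \<noteq> 0, S = End(M_R), and pick 0 \<noteq> x_n \<in> M_n.
   The projections e_n onto M_n generate a countably generated left ideal J of S.
   Every endomorphism in J kills all but finitely many x_n, because the set of
   such "almost annihilators" of (x_n) is itself a left ideal containing all e_n.
   Hence f(a) = \<Sum>n a(x_n) is a well-defined S-homomorphism J \<rightarrow> M.
   On the other hand every S-homomorphism g : S \<rightarrow> M is right multiplication by
   m = g(id), i.e. g(s) = s(m).  If g extended f we would get e_n(m) = f(e_n) = x_n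
   \<noteq> 0 for all n, so m would have infinitely many nonzero components, which is
   impossible in a direct sum. *)

lemma sum_over_support:
  fixes g :: "'i \<Rightarrow> 'a::comm_monoid_add"
  assumes "finite F" "{i. g i \<noteq> 0} \<subseteq> F"
  shows "sum g F = sum g {i. g i \<noteq> 0}"
  by (rule sum.mono_neutral_right) (use assms in auto)

section \<open>Endomorphisms and left ideals of End(M_R)\<close>

text \<open>Endomorphisms and the scalar actions x \<mapsto> x r are additive maps, so the
  library facts on additive maps (preservation of 0, negation, finite sums) apply.\<close>
lemma End_R_additive: "s \<in> End_R smul \<Longrightarrow> additive s"
  unfolding End_R_def additive_def by simp

lemma right_module_additive: "right_module smul \<Longrightarrow> additive (\<lambda>x. smul x r)"
  unfolding right_module_def additive_def by simp

lemma id_End_R: "id \<in> End_R smul"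
  unfolding End_R_def by simp

text \<open>The whole endomorphism ring is a left ideal of itself; this makes the
  generated left ideal (an intersection) land inside End(M_R).\<close>
lemma End_R_left_ideal:
  assumes "right_module smul"
  shows "left_ideal_End smul (End_R smul)"
  unfolding left_ideal_End_def
proof (intro conjI ballI)
  show "(\<lambda>_. 0) \<in> End_R smul"
    unfolding End_R_def using additive.zero[OF right_module_additive[OF assms]] by simp
  fix a assume a: "a \<in> End_R smul"
  show "(\<lambda>x. - a x) \<in> End_R smul"
    using a additive.minus[OF right_module_additive[OF assms]] unfolding End_R_def by simp
  show "(\<lambda>x. a x + b x) \<in> End_R smul" if "b \<in> End_R smul" for b
    using a that assms unfolding End_R_def right_module_def by (simp add: algebra_simps)
  show "s \<circ> a \<in> End_R smul" if "s \<in> End_R smul" for s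
    using a that unfolding End_R_def by simp
qed simp

lemma left_ideal_End_Inter:
  assumes "\<J> \<noteq> {}" "\<And>J. J \<in> \<J> \<Longrightarrow> left_ideal_End smul J"
  shows "left_ideal_End smul (\<Inter>\<J>)"
  unfolding left_ideal_End_def
proof (intro conjI ballI)
  have ideal: "J \<subseteq> End_R smul" "(\<lambda>_. 0) \<in> J"
    "\<And>a b. a \<in> J \<Longrightarrow> b \<in> J \<Longrightarrow> (\<lambda>x. a x + b x) \<in> J"
    "\<And>a. a \<in> J \<Longrightarrow> (\<lambda>x. - a x) \<in> J"
    "\<And>s a. s \<in> End_R smul \<Longrightarrow> a \<in> J \<Longrightarrow> s \<circ> a \<in> J" if "J \<in> \<J>" for J
    using assms(2)[OF that] unfolding left_ideal_End_def by blast+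
  show "\<Inter>\<J> \<subseteq> End_R smul" using assms(1) ideal(1) by blast
  show "(\<lambda>_. 0) \<in> \<Inter>\<J>" using ideal(2) by blast
  fix a assume a: "a \<in> \<Inter>\<J>"
  show "(\<lambda>x. a x + b x) \<in> \<Inter>\<J>" if "b \<in> \<Inter>\<J>" for b using a that ideal(3) by blast
  show "(\<lambda>x. - a x) \<in> \<Inter>\<J>" using a ideal(4) by blast
  show "s \<circ> a \<in> \<Inter>\<J>" if "s \<in> End_R smul" for s using a that ideal(5) by blast
qed

lemma left_ideal_gen_End_left_ideal:
  assumes "right_module smul" "X \<subseteq> End_R smul"
  shows "left_ideal_End smul (left_ideal_gen_End smul X)"
  unfolding left_ideal_gen_End_def
  using End_R_left_ideal[OF assms(1)] assms(2) by (intro left_ideal_End_Inter) auto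

lemma left_ideal_gen_End_least:
  "left_ideal_End smul J \<Longrightarrow> X \<subseteq> J \<Longrightarrow> left_ideal_gen_End smul X \<subseteq> J"
  unfolding left_ideal_gen_End_def by blast

lemma left_ideal_gen_End_generators: "X \<subseteq> left_ideal_gen_End smul X"
  unfolding left_ideal_gen_End_def by blast

lemma countably_generated_left_ideal_gen_End:
  assumes "right_module smul" "countable X" "X \<subseteq> End_R smul"
  shows "countably_generated_left_ideal_End smul (left_ideal_gen_End smul X)"
  unfolding countably_generated_left_ideal_End_def
  using left_ideal_gen_End_left_ideal[OF assms(1,3)] assms(2,3) by blast

text \<open>An S-homomorphism defined on all of S is right multiplication by the
  image of the identity: g s = g (s \<circ> id) = s (g id).\<close>
lemma S_hom_on_End_R_eq:
  assumes "S_hom_on smul (End_R smul) g" "s \<in> End_R smul"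
  shows "g s = s (g id)"
  using assms id_End_R unfolding S_hom_on_def by (metis comp_id)

section \<open>Almost annihilators and the evaluation-sum homomorphism\<close>

definition almost_annihilators ::
    "('m::ab_group_add \<Rightarrow> 'r::ring_1 \<Rightarrow> 'm) \<Rightarrow> ('i \<Rightarrow> 'm) \<Rightarrow> ('m \<Rightarrow> 'm) set" where
  "almost_annihilators smul xs = {a \<in> End_R smul. finite {i. a (xs i) \<noteq> 0}}"

text \<open>They form a left ideal: supports grow by at most a union under addition
  and shrink under composition with an endomorphism on the left.\<close>
lemma almost_annihilators_left_ideal:
  assumes "right_module smul"
  shows "left_ideal_End smul (almost_annihilators smul xs)"
  unfolding left_ideal_End_def
proof (intro conjI ballI)
  have End: "left_ideal_End smul (End_R smul)" by (rule End_R_left_ideal[OF assms])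
  show "almost_annihilators smul xs \<subseteq> End_R smul"
    unfolding almost_annihilators_def by auto
  show "(\<lambda>_. 0) \<in> almost_annihilators smul xs"
    using End unfolding almost_annihilators_def left_ideal_End_def by simp
  fix a assume "a \<in> almost_annihilators smul xs"
  then have a: "a \<in> End_R smul" "finite {i. a (xs i) \<noteq> 0}"
    unfolding almost_annihilators_def by auto
  show "(\<lambda>x. - a x) \<in> almost_annihilators smul xs"
    using a End unfolding almost_annihilators_def left_ideal_End_def by simp
  show "(\<lambda>x. a x + b x) \<in> almost_annihilators smul xs"
    if "b \<in> almost_annihilators smul xs" for b
  proof -
    have "{i. a (xs i) + b (xs i) \<noteq> 0} \<subseteq> {i. a (xs i) \<noteq> 0} \<union> {i. b (xs i) \<noteq> 0}" by auto
    then show ?thesis using a that End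
      unfolding almost_annihilators_def left_ideal_End_def by (auto intro: finite_subset)
  qed
  show "s \<circ> a \<in> almost_annihilators smul xs" if s: "s \<in> End_R smul" for s
  proof -
    have "{i. s (a (xs i)) \<noteq> 0} \<subseteq> {i. a (xs i) \<noteq> 0}"
      using additive.zero[OF End_R_additive[OF s]] by auto
    then show ?thesis using a s End
      unfolding almost_annihilators_def left_ideal_End_def by (auto intro: finite_subset)
  qed
qed

definition eval_sum :: "('i \<Rightarrow> 'm::ab_group_add) \<Rightarrow> ('m \<Rightarrow> 'm) \<Rightarrow> 'm" where
  "eval_sum xs a = sum (\<lambda>i. a (xs i)) {i. a (xs i) \<noteq> 0}"

lemma eval_sum_eq:
  assumes "finite F" "{i. a (xs i) \<noteq> 0} \<subseteq> F"
  shows "eval_sum xs a = sum (\<lambda>i. a (xs i)) F"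
  unfolding eval_sum_def using sum_over_support[OF assms] by simp

lemma eval_sum_S_hom:
  assumes "J \<subseteq> almost_annihilators smul xs"
  shows "S_hom_on smul J (eval_sum xs)"
  unfolding S_hom_on_def
proof (intro conjI ballI)
  have fin: "finite {i. a (xs i) \<noteq> 0}" if "a \<in> J" for a
    using that assms unfolding almost_annihilators_def by blast
  fix a assume a: "a \<in> J"
  show "eval_sum xs (\<lambda>x. a x + b x) = eval_sum xs a + eval_sum xs b" if b: "b \<in> J" for b
  proof -
    let ?F = "{i. a (xs i) \<noteq> 0} \<union> {i. b (xs i) \<noteq> 0}"
    have "finite ?F" using fin a b by simp
    moreover have "{i. a (xs i) + b (xs i) \<noteq> 0} \<subseteq> ?F" by auto
    ultimately show ?thesis
      using eval_sum_eq[of ?F a] eval_sum_eq[of ?F b] eval_sum_eq[of ?F "\<lambda>x. a x + b x"]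
      by (simp add: sum.distrib)
  qed
  show "eval_sum xs (s \<circ> a) = s (eval_sum xs a)" if s: "s \<in> End_R smul" for s
  proof -
    have support: "{i. (s \<circ> a) (xs i) \<noteq> 0} \<subseteq> {i. a (xs i) \<noteq> 0}"
      using additive.zero[OF End_R_additive[OF s]] by auto
    have "eval_sum xs (s \<circ> a) = sum (\<lambda>i. s (a (xs i))) {i. a (xs i) \<noteq> 0}"
      using eval_sum_eq[of _ "s \<circ> a" xs, OF fin[OF a] support] by simp
    also have "\<dots> = s (eval_sum xs a)"
      unfolding eval_sum_def by (rule additive.sum[OF End_R_additive[OF s], symmetric])
    finally show ?thesis .
  qed
qed

section \<open>Components in an internal direct sum\<close>

definition component :: "(nat \<Rightarrow> 'm::ab_group_add set) \<Rightarrow> 'm \<Rightarrow> nat \<Rightarrow> 'm" where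
  "component Mn x =
     (THE c. finite {n. c n \<noteq> 0} \<and> (\<forall>n. c n \<in> Mn n) \<and> x = sum c {n. c n \<noteq> 0})"

lemma component_props:
  assumes "internal_direct_sum smul Mn"
  shows "finite {n. component Mn x n \<noteq> 0}" "\<And>n. component Mn x n \<in> Mn n"
    "x = sum (component Mn x) {n. component Mn x n \<noteq> 0}"
proof -
  from assms have "\<exists>!c. finite {n. c n \<noteq> 0} \<and> (\<forall>n. c n \<in> Mn n) \<and> x = sum c {n. c n \<noteq> 0}"
    unfolding internal_direct_sum_def by blast
  from theI'[OF this] show "finite {n. component Mn x n \<noteq> 0}" "\<And>n. component Mn x n \<in> Mn n"
    "x = sum (component Mn x) {n. component Mn x n \<noteq> 0}"
    unfolding component_def by blast+
qed

lemma component_unique: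
  assumes "internal_direct_sum smul Mn" "finite F" "{n. c n \<noteq> 0} \<subseteq> F"
    "\<forall>n. c n \<in> Mn n" "x = sum c F"
  shows "component Mn x = c"
proof -
  from assms(1) have uniq:
    "\<exists>!c. finite {n. c n \<noteq> 0} \<and> (\<forall>n. c n \<in> Mn n) \<and> x = sum c {n. c n \<noteq> 0}"
    unfolding internal_direct_sum_def by blast
  have "finite {n. c n \<noteq> 0}" using assms(2,3) finite_subset by blast
  moreover have "x = sum c {n. c n \<noteq> 0}"
    using sum_over_support[OF assms(2,3)] assms(5) by simp
  ultimately show ?thesis unfolding component_def using the1_equality[OF uniq] assms(4) by blast
qed

text \<open>By uniqueness, taking components is additive and commutes with scalars.\<close>
lemma component_add:
  assumes "internal_direct_sum smul Mn"
  shows "component Mn (x + y) = (\<lambda>n. component Mn x n + component Mn y n)"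
proof (rule component_unique[OF assms])
  let ?F = "{n. component Mn x n \<noteq> 0} \<union> {n. component Mn y n \<noteq> 0}"
  show "finite ?F" using component_props(1)[OF assms] by blast
  show "{n. component Mn x n + component Mn y n \<noteq> 0} \<subseteq> ?F" by auto
  show "\<forall>n. component Mn x n + component Mn y n \<in> Mn n"
    using component_props(2)[OF assms] assms
    unfolding internal_direct_sum_def submodule_def by blast
  have "x = sum (component Mn x) ?F" "y = sum (component Mn y) ?F"
    using component_props[OF assms, of x] component_props[OF assms, of y]
      sum_over_support[of ?F "component Mn x"] sum_over_support[of ?F "component Mn y"]
    by auto
  then show "x + y = (\<Sum>n\<in>?F. component Mn x n + component Mn y n)"
    by (simp add: sum.distrib)
qed

lemma component_smul:
  assumes "internal_direct_sum smul Mn" "right_module smul"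
  shows "component Mn (smul x r) = (\<lambda>n. smul (component Mn x n) r)"
proof (rule component_unique[OF assms(1)])
  let ?F = "{n. component Mn x n \<noteq> 0}"
  have add: "additive (\<lambda>x. smul x r)" by (rule right_module_additive[OF assms(2)])
  show "finite ?F" by (rule component_props(1)[OF assms(1)])
  show "{n. smul (component Mn x n) r \<noteq> 0} \<subseteq> ?F" using additive.zero[OF add] by auto
  show "\<forall>n. smul (component Mn x n) r \<in> Mn n"
    using component_props(2)[OF assms(1)] assms(1)
    unfolding internal_direct_sum_def submodule_def by blast
  show "smul x r = (\<Sum>n\<in>?F. smul (component Mn x n) r)"
    using component_props(3)[OF assms(1), of x] additive.sum[OF add] by metis
qed

lemma component_single:
  assumes "internal_direct_sum smul Mn" "x \<in> Mn k"
  shows "component Mn x = (\<lambda>n. if n = k then x else 0)"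
proof (rule component_unique[OF assms(1), of "{k}"])
  show "\<forall>n. (if n = k then x else 0) \<in> Mn n"
    using assms unfolding internal_direct_sum_def submodule_def by auto
qed auto

lemma projection_End_R:
  assumes "internal_direct_sum smul Mn" "right_module smul"
  shows "(\<lambda>x. component Mn x n) \<in> End_R smul"
  unfolding End_R_def using component_add[OF assms(1)] component_smul[OF assms] by simp

text \<open>If xs k \<in> Mn k for all k, the projection onto Mn n kills every xs k with
  k \<noteq> n, so it is an almost annihilator of xs and its evaluation-sum is xs n.\<close>
lemma projection_almost_annihilator:
  assumes "internal_direct_sum smul Mn" "right_module smul" "\<And>k. xs k \<in> Mn k"
  shows "(\<lambda>x. component Mn x n) \<in> almost_annihilators smul xs"
    and "eval_sum xs (\<lambda>x. component Mn x n) = xs n"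
proof -
  have support: "{k. component Mn (xs k) n \<noteq> 0} \<subseteq> {n}"
    using component_single[OF assms(1) assms(3)] by auto
  then show "(\<lambda>x. component Mn x n) \<in> almost_annihilators smul xs"
    using projection_End_R[OF assms(1,2)]
    unfolding almost_annihilators_def by (auto intro: finite_subset)
  show "eval_sum xs (\<lambda>x. component Mn x n) = xs n"
    using eval_sum_eq[of "{n}" "\<lambda>x. component Mn x n" xs, OF _ support]
      component_single[OF assms(1) assms(3)] by simp
qed

theorem mainTheorem19:
  fixes smul :: "'m::ab_group_add \<Rightarrow> 'r::ring_1 \<Rightarrow> 'm"
    and Mn :: "nat \<Rightarrow> 'm set"
  assumes "right_module smul"
    and "internal_direct_sum smul Mn"
    and "\<forall>n. Mn n \<noteq> {0}"
  shows "\<not> aleph0_injective_over_End smul"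
proof
  assume inj: "aleph0_injective_over_End smul"
  have "0 \<in> Mn n" for n
    using assms(2) unfolding internal_direct_sum_def submodule_def by blast
  then have "\<exists>x. x \<in> Mn n \<and> x \<noteq> 0" for n
    using assms(3) by blast
  then obtain xs where xs: "\<And>n. xs n \<in> Mn n" "\<And>n. xs n \<noteq> 0" by metis
  define e where "e n = (\<lambda>x. component Mn x n)" for n
  define J where "J = left_ideal_gen_End smul (range e)"
  have e_ann: "e n \<in> almost_annihilators smul xs" "eval_sum xs (e n) = xs n" for n
    unfolding e_def using projection_almost_annihilator[OF assms(2,1) xs(1)] by auto
  have e_End: "range e \<subseteq> End_R smul"
    using e_ann(1) unfolding almost_annihilators_def by auto
  have "J \<subseteq> almost_annihilators smul xs"
    unfolding J_def using almost_annihilators_left_ideal[OF assms(1)] e_ann(1)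
    by (intro left_ideal_gen_End_least) auto
  moreover have "countably_generated_left_ideal_End smul J"
    unfolding J_def using countably_generated_left_ideal_gen_End[OF assms(1) _ e_End] by simp
  ultimately obtain g where g: "S_hom_on smul (End_R smul) g" "\<forall>a\<in>J. g a = eval_sum xs a"
    using inj eval_sum_S_hom unfolding aleph0_injective_over_End_def by blast
  have "component Mn (g id) n = xs n" for n
  proof -
    have "e n \<in> J" unfolding J_def using left_ideal_gen_End_generators by blast
    then have "e n (g id) = eval_sum xs (e n)"
      using S_hom_on_End_R_eq[OF g(1), of "e n"] e_End g(2) by (metis rangeI subsetD)
    then show ?thesis using e_ann(2) unfolding e_def by simp
  qed
  then have "{n. component Mn (g id) n \<noteq> 0} = UNIV" using xs(2) by auto
  then show False using component_props(1)[OF assms(2), of "g id"] by simp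
qed

end
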